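(* Let $\Phi(x,y)$ be a standard symmetric polynomial of partial degree $d$ and let $H$ be a finite, connected, $d$-regular graph that is strongly $\Phi$-polynomial. Then $G(\Phi)^*$ is vertex-transitive. In particular, $H$ is vertex-transitive.
   Context: For symmetric $\Phi(x,y)\in\mathbb{C}[x,y]$ of partial degree $d$ (degree $d$ in $y$), $G(\Phi)$ has vertex set $\mathbb{C}$, the neighbours of $u$ being the roots of $\Phi(u,y)$ (edges = points of $\mathbb{V}(\Phi)$). A component is singular if it contains a loop ($\Phi(u,u)=0$), a multiple edge (multiple root of $\Phi(u,y)$) or a defective vertex (leading coefficient in $y$ of $\Phi(u,y)$ vanishes). $\Phi$ is standard if it is squarefree, $\Phi(x,x)\not\equiv 0$, and $\Phi$ has no nonconstant factor depending only on $x$ (or only on $y$); $G(\Phi)^*$ is $G(\Phi)$ with its finitely many singular components removed. $H$ is $\Phi$-polynomial if it is isomorphic to some component of $G(\Phi)^*$, and strongly $\Phi$-polynomial if it is isomorphic to every component of $G(\Phi)^*$. *)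

theory Defs
  imports "HOL-Computational_Algebra.Computational_Algebra"
begin

text \<open>A bivariate polynomial Phi(x,y) in C[x,y] is represented as a polynomial in y
whose coefficients are polynomials in x, i.e. of type complex poly poly.\<close>

definition fiber :: "complex poly poly \<Rightarrow> complex \<Rightarrow> complex poly" where
  "fiber Phi u = map_poly (\<lambda>c. poly c u) Phi"

definition evalb :: "complex poly poly \<Rightarrow> complex \<Rightarrow> complex \<Rightarrow> complex" where
  "evalb Phi u v = poly (fiber Phi u) v"

definition symmetric_bipoly :: "complex poly poly \<Rightarrow> bool" where
  "symmetric_bipoly Phi \<longleftrightarrow> (\<forall>u v. evalb Phi u v = evalb Phi v u)"

definition partial_degree :: "complex poly poly \<Rightarrow> nat" where
  "partial_degree Phi = degree Phi"

definition standard :: "complex poly poly \<Rightarrow> bool" where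
  "standard Phi \<longleftrightarrow>
     squarefree Phi \<and>
     (\<exists>u. evalb Phi u u \<noteq> 0) \<and>
     (\<forall>p :: complex poly. [:p:] dvd Phi \<longrightarrow> degree p = 0) \<and>
     (\<forall>q :: complex poly. map_poly (\<lambda>c. [:c:]) q dvd Phi \<longrightarrow> degree q = 0)"

definition phi_adj :: "complex poly poly \<Rightarrow> complex \<Rightarrow> complex \<Rightarrow> bool" where
  "phi_adj Phi u v \<longleftrightarrow> evalb Phi u v = 0"

definition component :: "complex poly poly \<Rightarrow> complex \<Rightarrow> complex set" where
  "component Phi u = {v. (phi_adj Phi)\<^sup>*\<^sup>* u v}"

text \<open>Singular vertex: loop, multiple edge (multiple root of Phi(u,y)), or defective
(leading coefficient in y vanishes at u).\<close>
definition singular_vertex :: "complex poly poly \<Rightarrow> complex \<Rightarrow> bool" where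
  "singular_vertex Phi u \<longleftrightarrow>
     evalb Phi u u = 0 \<or>
     (fiber Phi u \<noteq> 0 \<and> (\<exists>v. order v (fiber Phi u) \<ge> 2)) \<or>
     poly (lead_coeff Phi) u = 0"

definition Gstar_components :: "complex poly poly \<Rightarrow> complex set set" where
  "Gstar_components Phi =
     {C. C \<in> range (component Phi) \<and> \<not> (\<exists>u\<in>C. singular_vertex Phi u)}"

definition Gstar_verts :: "complex poly poly \<Rightarrow> complex set" where
  "Gstar_verts Phi = \<Union> (Gstar_components Phi)"

definition graph_iso :: "'a set \<Rightarrow> ('a \<Rightarrow> 'a \<Rightarrow> bool) \<Rightarrow> 'b set \<Rightarrow> ('b \<Rightarrow> 'b \<Rightarrow> bool) \<Rightarrow> bool" where
  "graph_iso V E W F \<longleftrightarrow>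
     (\<exists>f. bij_betw f V W \<and> (\<forall>x\<in>V. \<forall>y\<in>V. E x y \<longleftrightarrow> F (f x) (f y)))"

definition vertex_transitive :: "'a set \<Rightarrow> ('a \<Rightarrow> 'a \<Rightarrow> bool) \<Rightarrow> bool" where
  "vertex_transitive V E \<longleftrightarrow>
     (\<forall>u\<in>V. \<forall>v\<in>V. \<exists>f. bij_betw f V V \<and>
        (\<forall>x\<in>V. \<forall>y\<in>V. E x y \<longleftrightarrow> E (f x) (f y)) \<and> f u = v)"

definition finite_simple_graph :: "'a set \<Rightarrow> ('a \<Rightarrow> 'a \<Rightarrow> bool) \<Rightarrow> bool" where
  "finite_simple_graph V E \<longleftrightarrow> finite V \<and>
     (\<forall>x\<in>V. \<forall>y\<in>V. E x y \<longleftrightarrow> E y x) \<and> (\<forall>x\<in>V. \<not> E x x)"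

definition connected_graph :: "'a set \<Rightarrow> ('a \<Rightarrow> 'a \<Rightarrow> bool) \<Rightarrow> bool" where
  "connected_graph V E \<longleftrightarrow> V \<noteq> {} \<and>
     (\<forall>x\<in>V. \<forall>y\<in>V. (\<lambda>a b. a \<in> V \<and> b \<in> V \<and> E a b)\<^sup>*\<^sup>* x y)"

definition regular_graph :: "'a set \<Rightarrow> ('a \<Rightarrow> 'a \<Rightarrow> bool) \<Rightarrow> nat \<Rightarrow> bool" where
  "regular_graph V E d \<longleftrightarrow> (\<forall>x\<in>V. card {y\<in>V. E x y} = d)"

definition strongly_phi_polynomial ::
  "complex poly poly \<Rightarrow> 'a set \<Rightarrow> ('a \<Rightarrow> 'a \<Rightarrow> bool) \<Rightarrow> bool" where
  "strongly_phi_polynomial Phi V E \<longleftrightarrow>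
     (\<forall>C\<in>Gstar_components Phi. graph_iso V E C (phi_adj Phi))"

end

theory Submission
  imports Defs "HOL-Computational_Algebra.Field_as_Ring" "Subresultants.Subresultant_Gcd"
    "HOL-Analysis.Analysis"
begin

text \<open>Only finitely many vertices of G(Phi) are singular: they are roots of Phi(x,x), of the
leading coefficient, or of the resultant of Phi and its y-derivative, which is nonzero because
Phi is squarefree. Every vertex has finitely many neighbours, so every component is countable,
and the vertex set of G(Phi)^* is the complement of a countable subset of the plane, hence
connected.

Every component of G(Phi)^* is a copy of the finite d-regular graph H. Since the roots of
Phi(u,y) depend continuously on u, for w close to u each vertex of the component of u has a
nearby vertex in the component of w; this defines a map that sends non-edges to non-edges (by
continuity) and therefore, counting the d neighbours on both sides, also edges to edges. So
"the components of u and w are isomorphic by an isomorphism sending u to w" is an equivalence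
relation on G(Phi)^* whose classes are open; by connectedness there is only one class. Swapping
the two components then gives automorphisms of G(Phi)^*, and conjugating by an isomorphism
with H gives automorphisms of H.\<close>

section \<open>Fibres of a bivariate polynomial\<close>

lemma exists_prime_factor_of_positive_degree:
  fixes p :: "'a :: {factorial_ring_gcd, semiring_gcd_mult_normalize} poly"
  shows "p \<noteq> 0 \<Longrightarrow> degree p \<noteq> 0 \<Longrightarrow> \<exists>q. prime q \<and> q dvd p \<and> degree q \<noteq> 0"
proof (induction p rule: prime_divisors_induct)
  case zero
  then show ?case by simp
next
  case (unit x)
  then show ?case by (simp add: poly_dvd_1)
next
  case (factor q x)
  then have degree_qx: "degree (q * x) = degree q + degree x"
    by (intro degree_mult_eq) auto
  show ?case
  proof (cases "degree q = 0")
    case True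
    with factor degree_qx obtain r where "prime r" "r dvd x" "degree r \<noteq> 0"
      by auto
    then show ?thesis
      by (auto intro: dvd_mult)
  next
    case False
    with factor show ?thesis
      by auto
  qed
qed

lemma resultant_pderiv_nonzero_if_squarefree:
  fixes p :: "'a :: {factorial_ring_gcd, semiring_gcd_mult_normalize, ring_char_0} poly"
  assumes "squarefree p"
  shows "resultant p (pderiv p) \<noteq> 0"
proof
  assume "resultant p (pderiv p) = 0"
  then have "degree (gcd p (pderiv p)) \<noteq> 0"
    by (simp add: resultant_0_gcd)
  moreover have "gcd p (pderiv p) \<noteq> 0"
    using assms by auto
  ultimately obtain q where q: "prime q" "q dvd gcd p (pderiv p)" "degree q \<noteq> 0"
    using exists_prime_factor_of_positive_degree by blast
  then have "q dvd p" "q dvd pderiv p"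
    by auto
  then obtain s where s: "p = q * s"
    by (auto elim: dvdE)
  have "q dvd q * pderiv s + s * pderiv q"
    using \<open>q dvd pderiv p\<close> by (simp add: s pderiv_mult)
  then have "q dvd s * pderiv q"
    by (metis dvd_add_right_iff dvd_triv_left)
  moreover have "\<not> q dvd pderiv q"
    using q(3) by simp
  ultimately have "q dvd s"
    using q(1) prime_dvd_mult_iff by blast
  then have "q * q dvd p"
    unfolding s by (rule mult_dvd_mono[OF dvd_refl])
  with assms q(1) show False
    by (metis power2_eq_square squarefreeD not_prime_unit)
qed

lemma coeff_fiber: "coeff (fiber Phi u) i = poly (coeff Phi i) u"
  by (simp add: fiber_def coeff_map_poly)

lemma fiber_pderiv: "fiber (pderiv Phi) u = pderiv (fiber Phi u)"
  by (rule poly_eqI) (simp add: coeff_fiber coeff_pderiv)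

lemma degree_fiber: "poly (lead_coeff Phi) u \<noteq> 0 \<Longrightarrow> degree (fiber Phi u) = degree Phi"
  by (metis coeff_map_poly degree_map_poly_le fiber_def le_antisym le_degree poly_0)

lemma lead_coeff_fiber:
  "poly (lead_coeff Phi) u \<noteq> 0 \<Longrightarrow> lead_coeff (fiber Phi u) = poly (lead_coeff Phi) u"
  by (simp add: degree_fiber coeff_fiber)

lemma evalb_altdef: "evalb Phi x y = (\<Sum>i\<le>degree Phi. poly (coeff Phi i) x * y ^ i)"
proof -
  have "evalb Phi x y = (\<Sum>i\<le>degree (fiber Phi x). coeff (fiber Phi x) i * y ^ i)"
    by (simp add: evalb_def poly_altdef)
  also have "\<dots> = (\<Sum>i\<le>degree Phi. coeff (fiber Phi x) i * y ^ i)"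
  proof -
    have "degree (fiber Phi x) \<le> degree Phi"
      unfolding fiber_def by (rule degree_map_poly_le)
    then show ?thesis
      by (intro sum.mono_neutral_left) (auto simp: coeff_eq_0)
  qed
  finally show ?thesis
    by (simp add: coeff_fiber)
qed

lemma evalb_diagonal: "evalb Phi u u = poly (poly Phi [:0, 1:]) u"
  unfolding evalb_def fiber_def by (induction Phi) simp_all

lemma resultant_pderiv_eq_0_if_multiple_root:
  fixes p :: "'a :: {field, factorial_ring_gcd, semiring_gcd_mult_normalize} poly"
  assumes "p \<noteq> 0" "order v p \<ge> 2"
  shows "resultant p (pderiv p) = 0"
proof -
  have "[:-v, 1:] ^ 2 dvd p"
    using assms(2) order_divides by blast
  then obtain q where q: "p = [:-v, 1:] ^ 2 * q"
    by (auto elim: dvdE)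
  have "[:-v, 1:] dvd gcd p (pderiv p)"
    unfolding q power2_eq_square mult.assoc pderiv_mult
    by (intro gcd_greatest dvd_add dvd_mult2 dvd_triv_left)
  then have "degree [:-v, 1:] \<le> degree (gcd p (pderiv p))"
    using assms(1) by (intro dvd_imp_degree_le) auto
  then show ?thesis
    by (simp add: resultant_0_gcd)
qed

lemma resultant_pderiv_fiber:
  assumes "poly (lead_coeff Phi) u \<noteq> 0" "degree Phi \<noteq> 0"
  shows "resultant (fiber Phi u) (pderiv (fiber Phi u)) = poly (resultant Phi (pderiv Phi)) u"
proof -
  have "coeff (pderiv Phi) (degree Phi - 1) = of_nat (degree Phi) * lead_coeff Phi"
    using assms(2) by (simp add: coeff_pderiv)
  then have "poly (lead_coeff (pderiv Phi)) u \<noteq> 0"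
    using assms by (simp add: degree_pderiv)
  then have "degree (map_poly (\<lambda>c. poly c u) (pderiv Phi)) = degree (pderiv Phi)"
    using degree_fiber by (simp add: fiber_def)
  moreover have "degree (map_poly (\<lambda>c. poly c u) Phi) = degree Phi"
    using degree_fiber[OF assms(1)] by (simp add: fiber_def)
  ultimately show ?thesis
    using poly_hom.resultant_map_poly fiber_pderiv[of Phi u] unfolding fiber_def by metis
qed

lemma poly_resultant_pderiv_eq_0_if_multiple_root:
  assumes "poly (lead_coeff Phi) u \<noteq> 0" "order v (fiber Phi u) \<ge> 2"
  shows "poly (resultant Phi (pderiv Phi)) u = 0"
proof -
  have "fiber Phi u \<noteq> 0"
    using lead_coeff_fiber[OF assms(1)] assms(1) by auto
  then have "degree Phi \<noteq> 0"
    using order_degree[of "fiber Phi u" v] assms degree_fiber by auto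
  then show ?thesis
    using resultant_pderiv_fiber[OF assms(1)]
      resultant_pderiv_eq_0_if_multiple_root[OF \<open>fiber Phi u \<noteq> 0\<close> assms(2)] by simp
qed

section \<open>Continuity of the roots\<close>

lemma norm_poly_ge_if_roots_far:
  fixes p :: "complex poly"
  assumes "p \<noteq> 0" "e \<ge> 0" "\<And>r. poly p r = 0 \<Longrightarrow> e \<le> dist r b"
  shows "norm (lead_coeff p) * e ^ degree p \<le> norm (poly p b)"
  using assms
proof (induction "degree p" arbitrary: p)
  case 0
  then obtain c where "p = [:c:]"
    by (metis degree_eq_zeroE)
  then show ?case
    by simp
next
  case (Suc n)
  then obtain r where r: "poly p r = 0"
    using fundamental_theorem_of_algebra constant_degree by (metis nat.distinct(1))
  then obtain q where q: "p = [:-r, 1:] * q"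
    by (auto simp: poly_eq_0_iff_dvd elim: dvdE)
  with Suc.prems have "q \<noteq> 0" "\<And>s. poly q s = 0 \<Longrightarrow> e \<le> dist s b"
    by auto
  moreover have "degree p = degree [:-r, 1:] + degree q"
    unfolding q using \<open>q \<noteq> 0\<close> by (intro degree_mult_eq) auto
  then have "degree q = n"
    using Suc.hyps(2) by simp
  ultimately have "norm (lead_coeff q) * e ^ n \<le> norm (poly q b)"
    using Suc by blast
  moreover have "e \<le> dist r b"
    using Suc.prems(3) r by blast
  ultimately have "e * (norm (lead_coeff q) * e ^ n) \<le> dist r b * norm (poly q b)"
    using Suc.prems(2) by (intro mult_mono) auto
  moreover have "norm (poly p b) = dist r b * norm (poly q b)"
  proof -
    have "poly p b = (b - r) * poly q b"
      by (simp add: q algebra_simps)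
    then show ?thesis
      by (simp add: norm_mult dist_norm norm_minus_commute)
  qed
  moreover have "lead_coeff p = lead_coeff q"
    unfolding q lead_coeff_mult by simp
  ultimately show ?case
    using Suc.hyps(2)[symmetric] by (simp add: algebra_simps)
qed

lemma tendsto_evalb [tendsto_intros]:
  "(f \<longlongrightarrow> a) F \<Longrightarrow> (g \<longlongrightarrow> b) F \<Longrightarrow>
    ((\<lambda>z. evalb Phi (f z) (g z)) \<longlongrightarrow> evalb Phi a b) F"
  unfolding evalb_altdef by (intro tendsto_intros)

lemma eventually_evalb_nonzero_near:
  assumes "evalb Phi a b \<noteq> 0"
  shows "eventually (\<lambda>e. \<forall>p q. dist p a < e \<longrightarrow> dist q b < e \<longrightarrow> evalb Phi p q \<noteq> 0) (at_right 0)"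
proof -
  have "((\<lambda>z. evalb Phi (fst z) (snd z)) \<longlongrightarrow> evalb Phi a b) (nhds (a, b))"
    using tendsto_fst[OF filterlim_ident, of "(a, b)"] tendsto_snd[OF filterlim_ident, of "(a, b)"]
    by (intro tendsto_intros) auto
  then have "eventually (\<lambda>z. evalb Phi (fst z) (snd z) \<noteq> 0) (nhds (a, b))"
    using assms by (rule tendsto_imp_eventually_ne)
  then obtain \<epsilon> where "\<epsilon> > 0" and \<epsilon>: "\<And>z. dist z (a, b) < \<epsilon> \<Longrightarrow> evalb Phi (fst z) (snd z) \<noteq> 0"
    unfolding eventually_nhds_metric by blast
  have "evalb Phi p q \<noteq> 0" if "dist p a < \<epsilon> / 2" "dist q b < \<epsilon> / 2" for p q
  proof -
    have "dist (p, q) (a, b) \<le> dist p a + dist q b"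
      unfolding dist_Pair_Pair by (rule sqrt_sum_squares_le_sum) auto
    then show ?thesis
      using \<epsilon>[of "(p, q)"] that by simp
  qed
  then show ?thesis
    unfolding eventually_at_right_field using \<open>\<epsilon> > 0\<close>
    by (intro exI[of _ "\<epsilon> / 2"]) auto
qed

lemma eventually_root_near:
  assumes lc: "poly (lead_coeff Phi) a \<noteq> 0" and root: "evalb Phi a b = 0" and "e > 0"
  shows "eventually (\<lambda>x. \<exists>r. evalb Phi x r = 0 \<and> dist r b < e) (nhds a)"
proof -
  define c where "c = norm (poly (lead_coeff Phi) a) / 2"
  have "c > 0"
    using lc by (simp add: c_def)
  have "((\<lambda>x. norm (poly (lead_coeff Phi) x)) \<longlongrightarrow> norm (poly (lead_coeff Phi) a)) (nhds a)"
    by (intro tendsto_intros filterlim_ident)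
  then have "eventually (\<lambda>x. c < norm (poly (lead_coeff Phi) x)) (nhds a)"
    by (rule order_tendstoD) (use \<open>c > 0\<close> in \<open>simp add: c_def\<close>)
  moreover have "((\<lambda>x. evalb Phi x b) \<longlongrightarrow> evalb Phi a b) (nhds a)"
    by (intro tendsto_intros filterlim_ident)
  then have "((\<lambda>x. norm (evalb Phi x b)) \<longlongrightarrow> 0) (nhds a)"
    using root tendsto_norm by fastforce
  then have "eventually (\<lambda>x. norm (evalb Phi x b) < c * e ^ degree Phi) (nhds a)"
    by (rule order_tendstoD) (use \<open>c > 0\<close> \<open>e > 0\<close> in simp)
  ultimately show ?thesis
  proof eventually_elim
    case (elim x)
    then have lc_x: "poly (lead_coeff Phi) x \<noteq> 0"
      using \<open>c > 0\<close> by auto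
    show ?case
    proof (rule ccontr)
      assume "\<nexists>r. evalb Phi x r = 0 \<and> dist r b < e"
      then have "norm (lead_coeff (fiber Phi x)) * e ^ degree (fiber Phi x) \<le> norm (poly (fiber Phi x) b)"
        using lead_coeff_fiber[OF lc_x] lc_x \<open>e > 0\<close>
        by (intro norm_poly_ge_if_roots_far) (auto simp: evalb_def not_less)
      then have "c * e ^ degree Phi \<le> norm (evalb Phi x b)"
        using elim \<open>e > 0\<close> lead_coeff_fiber[OF lc_x] degree_fiber[OF lc_x]
        by (simp add: evalb_def) (smt (verit) mult_right_mono zero_le_power)
      with elim show False
        by simp
    qed
  qed
qed

definition separating_radius :: "complex poly poly \<Rightarrow> complex set \<Rightarrow> real \<Rightarrow> bool" where
  "separating_radius Phi C e \<longleftrightarrow>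
     (\<forall>x\<in>C. \<forall>y\<in>C. x \<noteq> y \<longrightarrow> 2 * e \<le> dist x y) \<and>
     (\<forall>x\<in>C. \<forall>y\<in>C. \<not> phi_adj Phi x y \<longrightarrow>
        (\<forall>p q. dist p x < e \<longrightarrow> dist q y < e \<longrightarrow> \<not> phi_adj Phi p q))"

lemma exists_separating_radius:
  assumes "finite C"
  shows "\<exists>e>0. separating_radius Phi C e"
proof -
  define separating where "separating e x y \<longleftrightarrow> (x \<noteq> y \<longrightarrow> 2 * e \<le> dist x y) \<and>
    (\<not> phi_adj Phi x y \<longrightarrow> (\<forall>p q. dist p x < e \<longrightarrow> dist q y < e \<longrightarrow> \<not> phi_adj Phi p q))"
    for e :: real and x y
  have "eventually (\<lambda>e. separating e x y) (at_right 0)" for x y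
  proof -
    have "eventually (\<lambda>e. x \<noteq> y \<longrightarrow> 2 * e \<le> dist x y) (at_right 0)"
    proof (cases "x = y")
      case False
      then show ?thesis
        unfolding eventually_at_right_field by (intro exI[of _ "dist x y / 2"]) auto
    qed simp
    moreover have "eventually (\<lambda>e. \<not> phi_adj Phi x y \<longrightarrow>
        (\<forall>p q. dist p x < e \<longrightarrow> dist q y < e \<longrightarrow> \<not> phi_adj Phi p q)) (at_right 0)"
    proof (cases "phi_adj Phi x y")
      case False
      then show ?thesis
        using eventually_evalb_nonzero_near[of Phi x y] by (simp add: phi_adj_def)
    qed simp
    ultimately show ?thesis
      unfolding separating_def by (rule eventually_conj)
  qed
  then have "eventually (\<lambda>e. \<forall>x\<in>C. \<forall>y\<in>C. separating e x y) (at_right 0)"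
    using assms by (simp add: eventually_ball_finite)
  then obtain b :: real
    where "b > 0" and "\<And>e. 0 < e \<Longrightarrow> e < b \<Longrightarrow> \<forall>x\<in>C. \<forall>y\<in>C. separating e x y"
    unfolding eventually_at_right_field by blast
  then have "b / 2 > 0" "\<forall>x\<in>C. \<forall>y\<in>C. separating (b / 2) x y"
    by simp_all
  then show ?thesis
    unfolding separating_def separating_radius_def by blast
qed

section \<open>Rooted isomorphisms of graphs\<close>

definition rooted_graph_iso ::
  "'a set \<Rightarrow> ('a \<Rightarrow> 'a \<Rightarrow> bool) \<Rightarrow> 'a \<Rightarrow> 'b set \<Rightarrow> ('b \<Rightarrow> 'b \<Rightarrow> bool) \<Rightarrow> 'b \<Rightarrow> bool" where
  "rooted_graph_iso V E a W F b \<longleftrightarrow>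
     (\<exists>f. bij_betw f V W \<and> (\<forall>x\<in>V. \<forall>y\<in>V. E x y \<longleftrightarrow> F (f x) (f y)) \<and> f a = b)"

lemma vertex_transitive_iff_rooted_graph_iso:
  "vertex_transitive V E \<longleftrightarrow> (\<forall>a\<in>V. \<forall>b\<in>V. rooted_graph_iso V E a V E b)"
  by (simp add: vertex_transitive_def rooted_graph_iso_def)

lemma graph_iso_imp_rooted_graph_iso:
  assumes "graph_iso V E W F" "a \<in> V"
  obtains b where "b \<in> W" "rooted_graph_iso V E a W F b"
proof -
  obtain f where "bij_betw f V W" "\<forall>x\<in>V. \<forall>y\<in>V. E x y \<longleftrightarrow> F (f x) (f y)"
    using assms(1) unfolding graph_iso_def by blast
  then show thesis
    using that[of "f a"] assms(2) bij_betwE unfolding rooted_graph_iso_def by blast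
qed

lemma rooted_graph_iso_trans:
  assumes "rooted_graph_iso U D a V E b" "rooted_graph_iso V E b W F c"
  shows "rooted_graph_iso U D a W F c"
proof -
  obtain f where f: "bij_betw f U V" "\<forall>x\<in>U. \<forall>y\<in>U. D x y \<longleftrightarrow> E (f x) (f y)" "f a = b"
    using assms(1) unfolding rooted_graph_iso_def by blast
  obtain g where g: "bij_betw g V W" "\<forall>x\<in>V. \<forall>y\<in>V. E x y \<longleftrightarrow> F (g x) (g y)" "g b = c"
    using assms(2) unfolding rooted_graph_iso_def by blast
  have "\<forall>x\<in>U. \<forall>y\<in>U. D x y \<longleftrightarrow> F (g (f x)) (g (f y))"
    using f(2) g(2) bij_betwE[OF f(1)] by simp
  then show ?thesis
    unfolding rooted_graph_iso_def using bij_betw_trans[OF f(1) g(1)] f(3) g(3)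
    by (intro exI[of _ "g \<circ> f"]) auto
qed

lemma rooted_graph_iso_sym:
  assumes "rooted_graph_iso V E a W F b" "a \<in> V"
  shows "rooted_graph_iso W F b V E a"
proof -
  obtain f where f: "bij_betw f V W" "\<forall>x\<in>V. \<forall>y\<in>V. E x y \<longleftrightarrow> F (f x) (f y)" "f a = b"
    using assms(1) unfolding rooted_graph_iso_def by blast
  let ?g = "inv_into V f"
  have "bij_betw ?g W V"
    using f(1) by (rule bij_betw_inv_into)
  moreover have "F x y \<longleftrightarrow> E (?g x) (?g y)" if "x \<in> W" "y \<in> W" for x y
  proof -
    have "?g x \<in> V" "?g y \<in> V"
      using bij_betwE[OF \<open>bij_betw ?g W V\<close>] that by auto
    moreover have "f (?g x) = x" "f (?g y) = y"
      using f(1) that by (auto simp: bij_betw_def f_inv_into_f)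
    ultimately show ?thesis
      using f(2) by metis
  qed
  moreover have "?g b = a"
    using f assms(2) by (metis bij_betw_imp_inj_on inv_into_f_f)
  ultimately show ?thesis
    unfolding rooted_graph_iso_def by blast
qed

definition adjacency_closed :: "('a \<Rightarrow> 'a \<Rightarrow> bool) \<Rightarrow> 'a set \<Rightarrow> bool" where
  "adjacency_closed E C \<longleftrightarrow> (\<forall>x y. E x y \<longrightarrow> (x \<in> C \<longleftrightarrow> y \<in> C))"

lemma adjacency_closedD: "adjacency_closed E C \<Longrightarrow> E x y \<Longrightarrow> x \<in> C \<longleftrightarrow> y \<in> C"
  unfolding adjacency_closed_def by blast

lemma rooted_graph_iso_extend_by_id:
  assumes "rooted_graph_iso C E a C E b" "a \<in> C" "C \<subseteq> V" "adjacency_closed E C"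
  shows "rooted_graph_iso V E a V E b"
proof -
  obtain h where h: "bij_betw h C C" "\<forall>x\<in>C. \<forall>y\<in>C. E x y \<longleftrightarrow> E (h x) (h y)" "h a = b"
    using assms(1) unfolding rooted_graph_iso_def by blast
  define f where "f x = (if x \<in> C then h x else id x)" for x
  have "bij_betw f (C \<union> (V - C)) (C \<union> (V - C))"
    unfolding f_def by (intro bij_betw_disjoint_Un h(1) bij_betw_id) auto
  moreover have "C \<union> (V - C) = V"
    using assms(3) by blast
  moreover have "E x y \<longleftrightarrow> E (f x) (f y)" if "x \<in> V" "y \<in> V" for x y
  proof (cases "x \<in> C \<longleftrightarrow> y \<in> C")
    case True
    then show ?thesis
      using h(2) by (cases "x \<in> C") (auto simp: f_def)
  next
    case False
    moreover have "f z \<in> C \<longleftrightarrow> z \<in> C" for z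
      using bij_betwE[OF h(1)] by (auto simp: f_def)
    ultimately show ?thesis
      using adjacency_closedD[OF assms(4)] by blast
  qed
  moreover have "f a = b"
    using assms(2) h(3) by (simp add: f_def)
  ultimately show ?thesis
    unfolding rooted_graph_iso_def by (intro exI[of _ f]) auto
qed

lemma rooted_graph_iso_swap:
  assumes iso: "rooted_graph_iso C E a D E b" and "a \<in> C" "C \<inter> D = {}"
    and "adjacency_closed E C" "adjacency_closed E D"
  shows "rooted_graph_iso (C \<union> D) E a (C \<union> D) E b"
proof -
  obtain g where g: "bij_betw g C D" "\<forall>x\<in>C. \<forall>y\<in>C. E x y \<longleftrightarrow> E (g x) (g y)" "g a = b"
    using iso unfolding rooted_graph_iso_def by blast
  obtain g' where g': "bij_betw g' D C" "\<forall>x\<in>D. \<forall>y\<in>D. E x y \<longleftrightarrow> E (g' x) (g' y)"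
    using rooted_graph_iso_sym[OF iso \<open>a \<in> C\<close>] unfolding rooted_graph_iso_def by blast
  define f where "f x = (if x \<in> C then g x else g' x)" for x
  have "bij_betw f (C \<union> D) (D \<union> C)"
    unfolding f_def using assms(3) by (intro bij_betw_disjoint_Un g(1) g'(1)) auto
  then have "bij_betw f (C \<union> D) (C \<union> D)"
    by (simp only: Un_commute[of D C])
  moreover have "E x y \<longleftrightarrow> E (f x) (f y)" if xy: "x \<in> C \<union> D" "y \<in> C \<union> D" for x y
  proof -
    consider "x \<in> C" "y \<in> C" | "x \<in> D - C" "y \<in> D - C" | "\<not> (x \<in> C \<longleftrightarrow> y \<in> C)"
      using xy by blast
    then show ?thesis
    proof cases
      case 1
      then show ?thesis
        using g(2) by (simp add: f_def)
    next
      case 2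
      then show ?thesis
        using g'(2) by (simp add: f_def)
    next
      case 3
      moreover have "f z \<in> C \<longleftrightarrow> z \<notin> C" if "z \<in> C \<union> D" for z
        using that bij_betwE[OF g(1)] bij_betwE[OF g'(1)] assms(3) by (auto simp: f_def)
      ultimately show ?thesis
        using xy adjacency_closedD[OF assms(4)] by blast
    qed
  qed
  moreover have "f a = b"
    using assms(2) g(3) by (simp add: f_def)
  ultimately show ?thesis
    unfolding rooted_graph_iso_def by (intro exI[of _ f]) auto
qed

lemma rooted_graph_iso_extend:
  assumes iso: "rooted_graph_iso C E a D E b" and "a \<in> C" "C = D \<or> C \<inter> D = {}"
    and "C \<union> D \<subseteq> V" "adjacency_closed E C" "adjacency_closed E D"
  shows "rooted_graph_iso V E a V E b"
  using assms(3)
proof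
  assume "C = D"
  with iso have "rooted_graph_iso C E a C E b"
    by simp
  moreover have "C \<subseteq> V"
    using assms(4) by blast
  ultimately show ?thesis
    using rooted_graph_iso_extend_by_id[OF _ \<open>a \<in> C\<close> _ assms(5)] by blast
next
  assume "C \<inter> D = {}"
  then have "rooted_graph_iso (C \<union> D) E a (C \<union> D) E b"
    using rooted_graph_iso_swap[OF iso \<open>a \<in> C\<close> _ assms(5,6)] by blast
  moreover have "adjacency_closed E (C \<union> D)"
    using assms(5,6) unfolding adjacency_closed_def by blast
  ultimately show ?thesis
    using rooted_graph_iso_extend_by_id[OF _ _ assms(4)] \<open>a \<in> C\<close> by blast
qed

lemma countable_reachable:
  assumes "\<And>x. finite {y. E x y}"
  shows "countable {y. E\<^sup>*\<^sup>* x y}"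
proof -
  have "finite {y. (E ^^ n) x y}" for n
  proof (induction n)
    case 0
    then show ?case by simp
  next
    case (Suc n)
    have "{y. (E ^^ Suc n) x y} = (\<Union>z\<in>{z. (E ^^ n) x z}. {y. E z y})"
      by auto
    then show ?case
      using Suc assms by simp
  qed
  moreover have "{y. E\<^sup>*\<^sup>* x y} = (\<Union>n. {y. (E ^^ n) x y})"
    by (auto simp: rtranclp_power)
  ultimately show ?thesis
    by (auto intro: countable_finite)
qed

section \<open>The graph G(Phi)\<close>

locale standard_symmetric_bipoly =
  fixes Phi :: "complex poly poly"
  assumes standard: "standard Phi" and symmetric: "symmetric_bipoly Phi"
begin

lemma fiber_nonzero: "fiber Phi u \<noteq> 0"
proof
  assume "fiber Phi u = 0"
  then have "[:-u, 1:] dvd coeff Phi i" for i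
    using coeff_fiber[of Phi u i] by (simp add: poly_eq_0_iff_dvd)
  then have "[:[:-u, 1:]:] dvd Phi"
    by (simp add: const_poly_dvd_iff)
  then show False
    using standard unfolding standard_def by fastforce
qed

lemma phi_adj_commute: "phi_adj Phi u v \<longleftrightarrow> phi_adj Phi v u"
  using symmetric unfolding symmetric_bipoly_def phi_adj_def by metis

lemma finite_neighbours: "finite {v. phi_adj Phi u v}"
  using poly_roots_finite[OF fiber_nonzero] by (simp add: phi_adj_def evalb_def)

lemma component_refl: "u \<in> component Phi u"
  by (simp add: component_def)

lemma component_sym: "v \<in> component Phi u \<Longrightarrow> u \<in> component Phi v"
  unfolding component_def mem_Collect_eq
  by (induction rule: rtranclp_induct) (simp, metis converse_rtranclp_into_rtranclp phi_adj_commute)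

lemma component_eq: "v \<in> component Phi u \<Longrightarrow> component Phi v = component Phi u"
  using component_sym unfolding component_def by (auto intro: rtranclp_trans)

lemma component_eq_or_disjoint:
  "component Phi u = component Phi v \<or> component Phi u \<inter> component Phi v = {}"
  using component_eq by blast

lemma adjacency_closed_component: "adjacency_closed (phi_adj Phi) (component Phi u)"
  unfolding adjacency_closed_def component_def
  by (metis mem_Collect_eq phi_adj_commute rtranclp.rtrancl_into_rtrancl)

lemma countable_component: "countable (component Phi u)"
  unfolding component_def by (rule countable_reachable[OF finite_neighbours])

lemma finite_singular_vertices: "finite {u. singular_vertex Phi u}"
proof -
  let ?R = "resultant Phi (pderiv Phi)" and ?L = "poly Phi [:0, 1:]"
  have "?R \<noteq> 0"
    using standard resultant_pderiv_nonzero_if_squarefree by (auto simp: standard_def)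
  moreover have "?L \<noteq> 0" "lead_coeff Phi \<noteq> 0"
    using standard by (auto simp: standard_def evalb_diagonal)
  ultimately have "finite ({u. poly ?L u = 0} \<union> {u. poly (lead_coeff Phi) u = 0} \<union> {u. poly ?R u = 0})"
    by (simp add: poly_roots_finite)
  moreover have "{u. singular_vertex Phi u} \<subseteq>
      {u. poly ?L u = 0} \<union> {u. poly (lead_coeff Phi) u = 0} \<union> {u. poly ?R u = 0}"
    using poly_resultant_pderiv_eq_0_if_multiple_root
    by (auto simp: singular_vertex_def evalb_diagonal)
  ultimately show ?thesis
    by (rule finite_subset[rotated])
qed

lemma mem_Gstar_verts_iff: "u \<in> Gstar_verts Phi \<longleftrightarrow> (\<forall>s\<in>component Phi u. \<not> singular_vertex Phi s)"
proof
  assume "u \<in> Gstar_verts Phi"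
  then obtain x where "u \<in> component Phi x" "\<forall>s\<in>component Phi x. \<not> singular_vertex Phi s"
    unfolding Gstar_verts_def Gstar_components_def by blast
  then show "\<forall>s\<in>component Phi u. \<not> singular_vertex Phi s"
    using component_eq by blast
next
  assume "\<forall>s\<in>component Phi u. \<not> singular_vertex Phi s"
  then show "u \<in> Gstar_verts Phi"
    unfolding Gstar_verts_def Gstar_components_def using component_refl by blast
qed

lemma Gstar_verts_eq: "Gstar_verts Phi = - (\<Union>s\<in>{s. singular_vertex Phi s}. component Phi s)"
proof -
  have "u \<in> Gstar_verts Phi \<longleftrightarrow> u \<notin> (\<Union>s\<in>{s. singular_vertex Phi s}. component Phi s)" for u
    unfolding mem_Gstar_verts_iff using component_sym by blast
  then show ?thesis
    by blast
qed

lemma countable_singular_components: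
  "countable (\<Union>s\<in>{s. singular_vertex Phi s}. component Phi s)"
  using finite_singular_vertices countable_component by (intro countable_UN) (auto intro: countable_finite)

lemma connected_Gstar_verts: "connected (Gstar_verts Phi)"
  unfolding Gstar_verts_eq using countable_singular_components
  by (intro path_connected_imp_connected path_connected_complement_countable) auto

lemma Gstar_verts_nonempty: "Gstar_verts Phi \<noteq> {}"
  using countable_singular_components uncountable_UNIV_complex
  unfolding Gstar_verts_eq by (metis Compl_empty_eq double_compl)

lemma component_subset_Gstar_verts: "u \<in> Gstar_verts Phi \<Longrightarrow> component Phi u \<subseteq> Gstar_verts Phi"
  using component_eq by (auto simp: mem_Gstar_verts_iff)

lemma component_mem_Gstar_components: "u \<in> Gstar_verts Phi \<Longrightarrow> component Phi u \<in> Gstar_components Phi"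
  by (auto simp: Gstar_components_def mem_Gstar_verts_iff)

lemma lead_coeff_nonzero_if_mem_Gstar_verts:
  "u \<in> Gstar_verts Phi \<Longrightarrow> poly (lead_coeff Phi) u \<noteq> 0"
  using component_refl by (auto simp: mem_Gstar_verts_iff singular_vertex_def)

abbreviation rooted_component_iso :: "complex \<Rightarrow> complex \<Rightarrow> bool" where
  "rooted_component_iso u v \<equiv>
     rooted_graph_iso (component Phi u) (phi_adj Phi) u (component Phi v) (phi_adj Phi) v"

lemma eventually_component_near:
  assumes u: "u \<in> Gstar_verts Phi" and "x \<in> component Phi u" "e > 0"
  shows "eventually (\<lambda>w. \<exists>r\<in>component Phi w. dist r x < e) (nhds u)"
proof -
  have "(phi_adj Phi)\<^sup>*\<^sup>* u x"
    using assms(2) by (simp add: component_def)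
  then show ?thesis
    using \<open>e > 0\<close>
  proof (induction arbitrary: e rule: rtranclp_induct)
    case base
    then show ?case
      unfolding eventually_nhds_metric using component_refl by (intro exI[of _ e]) auto
  next
    case (step y z)
    have "y \<in> Gstar_verts Phi"
      using step.hyps(1) component_subset_Gstar_verts[OF u] by (auto simp: component_def)
    then have "eventually (\<lambda>y'. \<exists>r. phi_adj Phi y' r \<and> dist r z < e) (nhds y)"
      using eventually_root_near[OF lead_coeff_nonzero_if_mem_Gstar_verts _ step.prems] step.hyps(2)
      by (simp add: phi_adj_def)
    then obtain \<eta> where "\<eta> > 0" and \<eta>: "\<And>y'. dist y' y < \<eta> \<Longrightarrow> \<exists>r. phi_adj Phi y' r \<and> dist r z < e"
      unfolding eventually_nhds_metric by blast
    from step.IH[OF \<open>\<eta> > 0\<close>] show ?case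
    proof eventually_elim
      case (elim w)
      then obtain r where "r \<in> component Phi w" "dist r y < \<eta>"
        by blast
      moreover obtain r' where "phi_adj Phi r r'" "dist r' z < e"
        using \<eta> \<open>dist r y < \<eta>\<close> by blast
      ultimately have "r' \<in> component Phi w"
        using adjacency_closedD[OF adjacency_closed_component] by blast
      with \<open>dist r' z < e\<close> show ?case
        by blast
    qed
  qed
qed

end

section \<open>Components isomorphic to a fixed regular graph\<close>

locale strongly_polynomial_graph = standard_symmetric_bipoly Phi for Phi +
  fixes V :: "'a set" and E :: "'a \<Rightarrow> 'a \<Rightarrow> bool" and d :: nat
  assumes finite_V: "finite V" and regular: "regular_graph V E d"
    and strongly_polynomial: "strongly_phi_polynomial Phi V E"
begin

lemma graph_iso_component: "u \<in> Gstar_verts Phi \<Longrightarrow> graph_iso V E (component Phi u) (phi_adj Phi)"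
  using component_mem_Gstar_components strongly_polynomial
  unfolding strongly_phi_polynomial_def by blast

lemma card_component: "u \<in> Gstar_verts Phi \<Longrightarrow> card (component Phi u) = card V"
  using graph_iso_component unfolding graph_iso_def by (metis bij_betw_same_card)

lemma finite_component: "u \<in> Gstar_verts Phi \<Longrightarrow> finite (component Phi u)"
  using graph_iso_component finite_V unfolding graph_iso_def by (metis bij_betw_finite)

lemma card_neighbours:
  assumes "u \<in> Gstar_verts Phi"
  shows "card {v. phi_adj Phi u v} = d"
proof -
  obtain f where f: "bij_betw f V (component Phi u)"
    "\<forall>x\<in>V. \<forall>y\<in>V. E x y \<longleftrightarrow> phi_adj Phi (f x) (f y)"
    using graph_iso_component[OF assms] unfolding graph_iso_def by blast
  then obtain x where "x \<in> V" "f x = u"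
    using component_refl by (metis bij_betw_imp_surj_on imageE)
  have "{v. phi_adj Phi u v} = f ` {y\<in>V. E x y}"
  proof (intro equalityI subsetI)
    fix v
    assume "v \<in> {v. phi_adj Phi u v}"
    then have "phi_adj Phi u v" "v \<in> component Phi u"
      using adjacency_closedD[OF adjacency_closed_component] component_refl by blast+
    moreover obtain z where "z \<in> V" "v = f z"
      using f(1) \<open>v \<in> component Phi u\<close> unfolding bij_betw_def by blast
    ultimately show "v \<in> f ` {y\<in>V. E x y}"
      using f(2) \<open>x \<in> V\<close> \<open>f x = u\<close> by auto
  next
    fix v
    assume "v \<in> f ` {y\<in>V. E x y}"
    then show "v \<in> {v. phi_adj Phi u v}"
      using f(2) \<open>x \<in> V\<close> \<open>f x = u\<close> by auto
  qed
  moreover have "inj_on f {y\<in>V. E x y}"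
    using f(1) by (auto simp: bij_betw_def intro: inj_on_subset)
  ultimately show ?thesis
    using regular \<open>x \<in> V\<close> by (simp add: card_image regular_graph_def)
qed

lemma rooted_component_iso_if_close:
  assumes u: "u \<in> Gstar_verts Phi" and w: "w \<in> Gstar_verts Phi"
    and e: "separating_radius Phi (component Phi u) e"
    and close: "\<forall>x\<in>component Phi u. \<psi> x \<in> component Phi w \<and> dist (\<psi> x) x < e"
    and "\<psi> u = w"
  shows "rooted_component_iso u w"
proof -
  let ?C = "component Phi u" and ?D = "component Phi w"
  have separated: "\<forall>x\<in>?C. \<forall>y\<in>?C. x \<noteq> y \<longrightarrow> 2 * e \<le> dist x y"
    and nonadjacent: "\<forall>x\<in>?C. \<forall>y\<in>?C. \<not> phi_adj Phi x y \<longrightarrow>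
       (\<forall>p q. dist p x < e \<longrightarrow> dist q y < e \<longrightarrow> \<not> phi_adj Phi p q)"
    using e unfolding separating_radius_def by blast+
  have inj: "inj_on \<psi> ?C"
  proof (rule inj_onI, rule ccontr)
    fix x y
    assume "x \<in> ?C" "y \<in> ?C" "\<psi> x = \<psi> y" "x \<noteq> y"
    have "dist x y \<le> dist x (\<psi> x) + dist (\<psi> y) y"
      using dist_triangle[of x y "\<psi> x"] \<open>\<psi> x = \<psi> y\<close> by simp
    moreover have "dist x (\<psi> x) < e" "dist (\<psi> y) y < e"
      using close \<open>x \<in> ?C\<close> \<open>y \<in> ?C\<close> by (auto simp: dist_commute)
    ultimately have "dist x y < 2 * e"
      by linarith
    with separated \<open>x \<in> ?C\<close> \<open>y \<in> ?C\<close> \<open>x \<noteq> y\<close> show False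
      by fastforce
  qed
  have "\<psi> ` ?C = ?D"
    using close inj finite_component[OF w] card_component[OF u] card_component[OF w]
    by (intro card_subset_eq) (auto simp: card_image)
  then have bij: "bij_betw \<psi> ?C ?D"
    using inj by (simp add: bij_betw_def)
  have nonadjacent': "\<not> phi_adj Phi (\<psi> x) (\<psi> y)" if "x \<in> ?C" "y \<in> ?C" "\<not> phi_adj Phi x y" for x y
  proof -
    have "dist (\<psi> x) x < e" "dist (\<psi> y) y < e"
      using close that by auto
    then show ?thesis
      using nonadjacent that by blast
  qed
  have "phi_adj Phi (\<psi> x) (\<psi> y)" if "x \<in> ?C" "y \<in> ?C" "phi_adj Phi x y" for x y
  proof -
    let ?N = "{z\<in>?C. phi_adj Phi x z}"
    have "?N = {z. phi_adj Phi x z}"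
      using adjacency_closedD[OF adjacency_closed_component] \<open>x \<in> ?C\<close> by blast
    have "inj_on \<psi> ?N"
      using inj by (rule inj_on_subset) auto
    then have "card (\<psi> ` ?N) = card ?N"
      by (rule card_image)
    also have "\<dots> = d"
      using \<open>?N = {z. phi_adj Phi x z}\<close> card_neighbours component_subset_Gstar_verts[OF u] \<open>x \<in> ?C\<close>
      by auto
    finally have "card (\<psi> ` ?N) = d" .
    moreover have "{v. phi_adj Phi (\<psi> x) v} \<subseteq> \<psi> ` ?N"
    proof
      fix v
      assume "v \<in> {v. phi_adj Phi (\<psi> x) v}"
      moreover have "\<psi> x \<in> ?D"
        using close \<open>x \<in> ?C\<close> by blast
      ultimately have "v \<in> \<psi> ` ?C"
        using adjacency_closedD[OF adjacency_closed_component] \<open>\<psi> ` ?C = ?D\<close> by blast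
      then show "v \<in> \<psi> ` ?N"
        using nonadjacent' \<open>x \<in> ?C\<close> \<open>v \<in> {v. phi_adj Phi (\<psi> x) v}\<close> by blast
    qed
    moreover have "card {v. phi_adj Phi (\<psi> x) v} = d"
      using card_neighbours component_subset_Gstar_verts[OF w] close \<open>x \<in> ?C\<close> by blast
    ultimately have "{v. phi_adj Phi (\<psi> x) v} = \<psi> ` ?N"
      using finite_component[OF u] by (intro card_subset_eq) auto
    then show ?thesis
      using that by blast
  qed
  with nonadjacent' bij \<open>\<psi> u = w\<close> show ?thesis
    unfolding rooted_graph_iso_def by blast
qed

lemma eventually_rooted_component_iso:
  assumes u: "u \<in> Gstar_verts Phi"
  shows "eventually (\<lambda>w. w \<in> Gstar_verts Phi \<longrightarrow> rooted_component_iso u w) (nhds u)"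
proof -
  obtain e where "e > 0" and e: "separating_radius Phi (component Phi u) e"
    using exists_separating_radius[OF finite_component[OF u]] by blast
  have "eventually (\<lambda>w. \<forall>x\<in>component Phi u. \<exists>r\<in>component Phi w. dist r x < e) (nhds u)"
    using eventually_component_near[OF u _ \<open>e > 0\<close>] finite_component[OF u]
    by (simp add: eventually_ball_finite)
  moreover have "eventually (\<lambda>w. dist w u < e) (nhds u)"
    using \<open>e > 0\<close> eventually_nhds_metric by blast
  ultimately show ?thesis
  proof eventually_elim
    case (elim w)
    then obtain \<psi> where "\<forall>x\<in>component Phi u. \<psi> x \<in> component Phi w \<and> dist (\<psi> x) x < e"
      by metis
    then have "\<forall>x\<in>component Phi u. (\<psi>(u := w)) x \<in> component Phi w \<and>
        dist ((\<psi>(u := w)) x) x < e"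
      using component_refl \<open>dist w u < e\<close> by simp
    then show ?case
      using rooted_component_iso_if_close[OF u _ e] by simp
  qed
qed

lemma rooted_component_iso_Gstar_verts:
  assumes "u \<in> Gstar_verts Phi" "v \<in> Gstar_verts Phi"
  shows "rooted_component_iso u v"
  using connected_Gstar_verts assms
proof (rule connected_equivalence_relation[where R = rooted_component_iso])
  fix x y
  assume "rooted_component_iso x y"
  then show "rooted_component_iso y x"
    using component_refl by (rule rooted_graph_iso_sym)
next
  fix x y z
  assume "rooted_component_iso x y" "rooted_component_iso y z"
  then show "rooted_component_iso x z"
    by (rule rooted_graph_iso_trans)
next
  fix a
  assume "a \<in> Gstar_verts Phi"
  then obtain T where "open T" "a \<in> T" and "\<forall>w\<in>T. w \<in> Gstar_verts Phi \<longrightarrow> rooted_component_iso a w"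
    using eventually_rooted_component_iso unfolding eventually_nhds by blast
  then show "\<exists>T. openin (top_of_set (Gstar_verts Phi)) T \<and> a \<in> T \<and> (\<forall>w\<in>T. rooted_component_iso a w)"
    using \<open>a \<in> Gstar_verts Phi\<close> by (intro exI[of _ "Gstar_verts Phi \<inter> T"]) auto
qed

lemma vertex_transitive_Gstar: "vertex_transitive (Gstar_verts Phi) (phi_adj Phi)"
  unfolding vertex_transitive_iff_rooted_graph_iso
proof (intro ballI)
  fix u v
  assume u: "u \<in> Gstar_verts Phi" and v: "v \<in> Gstar_verts Phi"
  then have "component Phi u \<union> component Phi v \<subseteq> Gstar_verts Phi"
    using component_subset_Gstar_verts by blast
  then show "rooted_graph_iso (Gstar_verts Phi) (phi_adj Phi) u (Gstar_verts Phi) (phi_adj Phi) v"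
    using rooted_graph_iso_extend[OF rooted_component_iso_Gstar_verts[OF u v] component_refl
        component_eq_or_disjoint _ adjacency_closed_component adjacency_closed_component] by blast
qed

lemma vertex_transitive_graph: "vertex_transitive V E"
  unfolding vertex_transitive_iff_rooted_graph_iso
proof (intro ballI)
  fix a b
  assume "a \<in> V" "b \<in> V"
  obtain u where u: "u \<in> Gstar_verts Phi"
    using Gstar_verts_nonempty by blast
  obtain x where "x \<in> component Phi u" and a: "rooted_graph_iso V E a (component Phi u) (phi_adj Phi) x"
    using graph_iso_imp_rooted_graph_iso[OF graph_iso_component[OF u] \<open>a \<in> V\<close>] .
  obtain y where "y \<in> component Phi u" and b: "rooted_graph_iso V E b (component Phi u) (phi_adj Phi) y"
    using graph_iso_imp_rooted_graph_iso[OF graph_iso_component[OF u] \<open>b \<in> V\<close>] .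
  have "rooted_graph_iso (component Phi u) (phi_adj Phi) x (component Phi u) (phi_adj Phi) y"
    using rooted_component_iso_Gstar_verts[of x y] component_subset_Gstar_verts[OF u]
      component_eq[OF \<open>x \<in> component Phi u\<close>] component_eq[OF \<open>y \<in> component Phi u\<close>]
      \<open>x \<in> component Phi u\<close> \<open>y \<in> component Phi u\<close> by auto
  then have "rooted_graph_iso V E a (component Phi u) (phi_adj Phi) y"
    by (rule rooted_graph_iso_trans[OF a])
  then show "rooted_graph_iso V E a V E b"
    using rooted_graph_iso_sym[OF b \<open>b \<in> V\<close>] by (rule rooted_graph_iso_trans)
qed

end

theorem mainTheorem6:
  fixes Phi :: "complex poly poly" and d :: nat
    and V :: "'a set" and E :: "'a \<Rightarrow> 'a \<Rightarrow> bool"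
  assumes "standard Phi"
    and "symmetric_bipoly Phi"
    and "partial_degree Phi = d"
    and "finite_simple_graph V E"
    and "connected_graph V E"
    and "regular_graph V E d"
    and "strongly_phi_polynomial Phi V E"
  shows "vertex_transitive (Gstar_verts Phi) (phi_adj Phi) \<and> vertex_transitive V E"
proof -
  \<comment> \<open>Connectedness of H and d = degree Phi are implied by the other hypotheses and not used.\<close>
  interpret strongly_polynomial_graph Phi V E d
    using assms by unfold_locales (auto simp: finite_simple_graph_def)
  show ?thesis
    using vertex_transitive_Gstar vertex_transitive_graph by blast
qed

end
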